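(* There exists $\varepsilon_0 > 0$ such that if $\Omega \subset \mathbb{R}^2$ is a convex domain with area $|\Omega| = 1$ and $\mathcal{A}(\Omega) \leq \varepsilon_0$, and $u$ solves $-\Delta u = 1$ in $\Omega$ with $u = 0$ on $\partial\Omega$, then $$ \|\nabla u\|_{L^{\infty}(\Omega)} \leq 0.39 < \frac{1}{\sqrt{2\pi}}.$$
   Context: The Fraenkel asymmetry of $\Omega$ is $\mathcal{A}(\Omega) = \inf_{B} |B \,\Delta\, \Omega| / |\Omega|$, where the infimum is over all disks $B \subset \mathbb{R}^2$ with $|B| = |\Omega|$ and $B \,\Delta\, \Omega = (B\setminus\Omega)\cup(\Omega\setminus B)$ is the symmetric difference. *)

theory Defs
  imports "HOL-Analysis.Analysis"
begin

abbreviation area :: "(real^2) set \<Rightarrow> real" where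
  "area S \<equiv> measure lebesgue S"

definition fraenkel_asymmetry :: "(real^2) set \<Rightarrow> real" where
  "fraenkel_asymmetry \<Omega> =
     Inf { area ((B - \<Omega>) \<union> (\<Omega> - B)) / area \<Omega> | B.
             (\<exists>c r. r > 0 \<and> B = ball c r) \<and> area B = area \<Omega> }"

text \<open>H x is the derivative of the gradient at x (the Hessian); the Laplacian is its trace.\<close>
definition torsion_solution ::
  "(real^2) set \<Rightarrow> (real^2 \<Rightarrow> real) \<Rightarrow> (real^2 \<Rightarrow> real^2) \<Rightarrow> bool" where
  "torsion_solution \<Omega> u g \<longleftrightarrow>
     continuous_on (closure \<Omega>) u \<and>
     (\<forall>x\<in>frontier \<Omega>. u x = 0) \<and>
     (\<forall>x\<in>\<Omega>. (u has_derivative (\<lambda>h. g x \<bullet> h)) (at x)) \<and>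
     (\<exists>H. (\<forall>x\<in>\<Omega>. (g has_derivative H x) (at x)) \<and>
          (\<forall>i\<in>Basis. \<forall>j\<in>Basis. continuous_on \<Omega> (\<lambda>x. H x i \<bullet> j)) \<and>
          (\<forall>x\<in>\<Omega>. - (\<Sum>i\<in>Basis. H x i \<bullet> i) = 1))"

end

theory Submission
  imports Defs
begin

text \<open>If the Fraenkel asymmetry of a convex \<open>\<Omega>\<close> of unit area is small, \<open>\<Omega>\<close> lies in a thin
  annulus \<open>ball c r \<subseteq> \<Omega> \<subseteq> ball c R\<close> around the disk of area 1: otherwise convexity
  would force a whole small disk into the symmetric difference. At a boundary point \<open>p\<close> with
  supporting half-plane \<open>{(y - p) \<bullet> \<nu> \<ge> 0}\<close> the barrier
  \<open>v y = (R'\<^sup>2 - |y - p - R' \<nu>|\<^sup>2) / 4 + (s\<^sup>2 / 2) ln (|y - p + s \<nu>|\<^sup>2 / s\<^sup>2)\<close>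
  satisfies \<open>-\<Delta>v = 1\<close>, because the logarithm is harmonic in the plane. For \<open>R'\<close> slightly larger
  than \<open>R\<close> and \<open>s\<close> a multiple of the width \<open>sqrt (R\<^sup>2 - r\<^sup>2)\<close>, \<open>v\<close> is nonnegative on the annulus
  and \<open>v y \<le> L |y - p| + |y - p|\<^sup>2 / 2\<close> with \<open>L = R' / 2 + s\<close>; the maximum principle gives
  \<open>u \<le> v\<close>. Comparing \<open>u\<close> with its translate \<open>u (\<cdot> + h)\<close> on \<open>\<Omega> \<inter> (\<Omega> - h)\<close>, where both
  solve the same equation, the maximum principle once more yields
  \<open>u (x + h) - u x \<le> L |h| + |h|\<^sup>2 / 2\<close>, hence \<open>|\<nabla>u| \<le> L\<close>; with \<open>R \<approx> 1 / sqrt pi\<close>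
  this is below \<open>0.39\<close>.\<close>

section \<open>The weak maximum principle\<close>

lemma local_max_imp_second_deriv_nonpos:
  fixes \<phi> \<psi> :: "real \<Rightarrow> real"
  assumes d: "d > 0"
    and der: "\<And>\<tau>. \<bar>\<tau>\<bar> < d \<Longrightarrow> (\<phi> has_real_derivative \<psi> \<tau>) (at \<tau>)"
    and der2: "(\<psi> has_real_derivative a) (at 0)"
    and max: "\<And>\<tau>. \<bar>\<tau>\<bar> < d \<Longrightarrow> \<phi> \<tau> \<le> \<phi> 0"
  shows "a \<le> 0"
proof (rule ccontr)
  assume "\<not> a \<le> 0"
  then have "a > 0" by simp
  have "\<psi> 0 = 0"
    using DERIV_local_max[OF der[of 0] d] max d by force
  moreover obtain d' where d': "d' > 0" "\<And>h. h > 0 \<Longrightarrow> h < d' \<Longrightarrow> \<psi> 0 < \<psi> (0 + h)"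
    using DERIV_pos_inc_right[OF der2 \<open>a > 0\<close>] by blast
  moreover define \<tau> where "\<tau> = min d d' / 2"
  ultimately have \<tau>: "0 < \<tau>" "\<tau> < d" "\<And>h. 0 < h \<Longrightarrow> h < \<tau> \<Longrightarrow> \<psi> h > 0"
    using d by (auto simp: \<tau>_def)
  obtain \<xi> where \<xi>: "0 < \<xi>" "\<xi> < \<tau>" "\<phi> \<tau> - \<phi> 0 = (\<tau> - 0) * \<psi> \<xi>"
    using MVT2[of 0 \<tau> \<phi> \<psi>] \<tau> der by force
  moreover have "\<psi> \<xi> > 0" using \<tau>(3) \<xi> by blast
  ultimately have "\<phi> \<tau> > \<phi> 0" using \<tau>(1) by (smt (verit) mult_pos_pos)
  with max[of \<tau>] \<tau> show False by simp
qed

lemma local_max_imp_laplacian_nonpos: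
  fixes f :: "'a::euclidean_space \<Rightarrow> real"
  assumes r: "r > 0"
    and df: "\<And>x. x \<in> ball z r \<Longrightarrow> (f has_derivative (\<lambda>h. G x \<bullet> h)) (at x)"
    and dG: "(G has_derivative K) (at z)"
    and max: "\<And>x. x \<in> ball z r \<Longrightarrow> f x \<le> f z"
  shows "(\<Sum>i\<in>Basis. K i \<bullet> i) \<le> 0"
proof (rule sum_nonpos)
  fix e :: 'a assume "e \<in> Basis"
  have line: "z + \<tau> *\<^sub>R e \<in> ball z r" if "\<bar>\<tau>\<bar> < r" for \<tau>
    using that \<open>e \<in> Basis\<close> by (simp add: dist_norm)
  have dline: "((\<lambda>\<tau>. z + \<tau> *\<^sub>R e) has_derivative (\<lambda>t. t *\<^sub>R e)) (at \<tau>)" for \<tau>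
    by (auto intro!: derivative_eq_intros)
  have "((\<lambda>\<tau>. f (z + \<tau> *\<^sub>R e)) has_real_derivative G (z + \<tau> *\<^sub>R e) \<bullet> e) (at \<tau>)"
    if "\<bar>\<tau>\<bar> < r" for \<tau>
    using diff_chain_at[OF dline df[OF line[OF that]]] unfolding has_field_derivative_def o_def
    by (rule has_derivative_eq_rhs) (simp add: fun_eq_iff)
  moreover have "((\<lambda>\<tau>. G (z + \<tau> *\<^sub>R e) \<bullet> e) has_real_derivative K e \<bullet> e) (at 0)"
  proof -
    have "((G \<circ> (\<lambda>\<tau>. z + \<tau> *\<^sub>R e)) has_derivative (K \<circ> (\<lambda>t. t *\<^sub>R e))) (at 0)"
      using diff_chain_at[OF dline, of G K 0] dG by simp
    from has_derivative_inner_left[OF this[unfolded o_def], of e]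
    show ?thesis unfolding has_field_derivative_def
      by (rule has_derivative_eq_rhs)
        (simp add: fun_eq_iff linear_scale[OF has_derivative_linear[OF dG]])
  qed
  ultimately show "K e \<bullet> e \<le> 0"
    using local_max_imp_second_deriv_nonpos[OF r] max line by force
qed

text \<open>The quadratic perturbation \<open>\<epsilon> |y|\<^sup>2\<close> makes the Laplacian strictly positive,
  which is incompatible with an interior maximum.\<close>

lemma weak_maximum_principle:
  fixes f :: "'a::euclidean_space \<Rightarrow> real"
  assumes U: "open U" "bounded U" and cf: "continuous_on (closure U) f"
    and df: "\<And>x. x \<in> U \<Longrightarrow> (f has_derivative (\<lambda>h. G x \<bullet> h)) (at x)"
    and dG: "\<And>x. x \<in> U \<Longrightarrow> (G has_derivative K x) (at x)"
    and subharmonic: "\<And>x. x \<in> U \<Longrightarrow> (\<Sum>i\<in>Basis. K x i \<bullet> i) \<ge> 0"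
    and boundary: "\<And>y. y \<in> frontier U \<Longrightarrow> f y \<le> M"
    and x: "x \<in> U"
  shows "f x \<le> M"
proof (rule ccontr)
  assume "\<not> f x \<le> M"
  obtain D where D: "\<And>y. y \<in> closure U \<Longrightarrow> norm y \<le> D"
    using bounded_closure[OF U(2)] unfolding bounded_iff by blast
  define \<epsilon> where "\<epsilon> = (f x - M) / (2 * (D\<^sup>2 + 1))"
  have "\<epsilon> > 0"
    using \<open>\<not> f x \<le> M\<close> unfolding \<epsilon>_def by (smt (verit) divide_pos_pos zero_le_power2)
  have "\<epsilon> * D\<^sup>2 = (f x - M) * (D\<^sup>2 / (2 * (D\<^sup>2 + 1)))" by (simp add: \<epsilon>_def)
  also have "\<dots> < (f x - M) * 1"
    using \<open>\<not> f x \<le> M\<close> by (intro mult_strict_left_mono) (auto simp: field_simps add_pos_nonneg)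
  finally have "\<epsilon> * D\<^sup>2 < f x - M" by simp
  define f\<^sub>\<epsilon> where "f\<^sub>\<epsilon> y = f y + \<epsilon> * (y \<bullet> y)" for y
  obtain z where z: "z \<in> closure U" "\<And>y. y \<in> closure U \<Longrightarrow> f\<^sub>\<epsilon> y \<le> f\<^sub>\<epsilon> z"
    using continuous_attains_sup[of "closure U" f\<^sub>\<epsilon>] compact_closure[of U] U(2) x closure_subset
    unfolding f\<^sub>\<epsilon>_def by (force intro!: continuous_intros cf)
  have "z \<notin> frontier U"
  proof
    assume "z \<in> frontier U"
    have "z \<bullet> z \<le> D\<^sup>2"
      using D[OF z(1)] by (metis norm_ge_zero power_mono power2_norm_eq_inner)
    then have "f\<^sub>\<epsilon> z < f x"
      using boundary[OF \<open>z \<in> frontier U\<close>] \<open>\<epsilon> > 0\<close> \<open>\<epsilon> * D\<^sup>2 < f x - M\<close>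
      unfolding f\<^sub>\<epsilon>_def by (smt (verit) mult_left_mono)
    moreover have "f x \<le> f\<^sub>\<epsilon> x" using \<open>\<epsilon> > 0\<close> by (simp add: f\<^sub>\<epsilon>_def)
    ultimately show False using z(2)[of x] x closure_subset by force
  qed
  then have "z \<in> U" using z(1) U(1) by (simp add: frontier_def interior_open)
  then obtain r where r: "r > 0" "ball z r \<subseteq> U" using U(1) open_contains_ball by blast
  have df\<^sub>\<epsilon>: "(f\<^sub>\<epsilon> has_derivative (\<lambda>h. (G y + (2 * \<epsilon>) *\<^sub>R y) \<bullet> h)) (at y)" if "y \<in> U" for y
    unfolding f\<^sub>\<epsilon>_def using df[OF that]
    by (auto intro!: derivative_eq_intros simp: fun_eq_iff inner_add_right inner_commute)
  have dG\<^sub>\<epsilon>: "((\<lambda>y. G y + (2 * \<epsilon>) *\<^sub>R y) has_derivative (\<lambda>h. K z h + (2 * \<epsilon>) *\<^sub>R h)) (at z)"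
    using dG[OF \<open>z \<in> U\<close>] by (auto intro!: derivative_eq_intros)
  have "(\<Sum>i\<in>Basis. (K z i + (2 * \<epsilon>) *\<^sub>R i) \<bullet> i) \<le> 0"
    using local_max_imp_laplacian_nonpos[OF r(1) _ dG\<^sub>\<epsilon>] df\<^sub>\<epsilon> r(2) z(2) closure_subset
    by (meson subsetD)
  then have "(\<Sum>i\<in>Basis. K z i \<bullet> i) + DIM('a) * (2 * \<epsilon>) \<le> 0"
    by (simp add: inner_add_left sum.distrib)
  with subharmonic[OF \<open>z \<in> U\<close>] \<open>\<epsilon> > 0\<close> show False
    by (smt (verit) DIM_positive mult_pos_pos of_nat_0_less_iff)
qed

lemma comparison_principle:
  fixes u v :: "'a::euclidean_space \<Rightarrow> real"
  assumes U: "open U" "bounded U"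
    and cu: "continuous_on (closure U) u" and cv: "continuous_on (closure U) v"
    and du: "\<And>x. x \<in> U \<Longrightarrow> (u has_derivative (\<lambda>h. Gu x \<bullet> h)) (at x)"
    and dGu: "\<And>x. x \<in> U \<Longrightarrow> (Gu has_derivative Hu x) (at x)"
    and dv: "\<And>x. x \<in> U \<Longrightarrow> (v has_derivative (\<lambda>h. Gv x \<bullet> h)) (at x)"
    and dGv: "\<And>x. x \<in> U \<Longrightarrow> (Gv has_derivative Hv x) (at x)"
    and laplacian: "\<And>x. x \<in> U \<Longrightarrow> (\<Sum>i\<in>Basis. Hv x i \<bullet> i) \<le> (\<Sum>i\<in>Basis. Hu x i \<bullet> i)"
    and boundary: "\<And>x. x \<in> frontier U \<Longrightarrow> u x \<le> v x"
    and x: "x \<in> U"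
  shows "u x \<le> v x"
proof -
  have "u x - v x \<le> 0"
  proof (rule weak_maximum_principle[OF U, where G = "\<lambda>x. Gu x - Gv x" and K = "\<lambda>x h. Hu x h - Hv x h"])
    show "continuous_on (closure U) (\<lambda>x. u x - v x)" using cu cv by (rule continuous_on_diff)
    fix y assume "y \<in> U"
    show "((\<lambda>x. u x - v x) has_derivative (\<lambda>h. (Gu y - Gv y) \<bullet> h)) (at y)"
      using has_derivative_diff[OF du[OF \<open>y \<in> U\<close>] dv[OF \<open>y \<in> U\<close>]] by (simp add: inner_diff_left)
    show "((\<lambda>x. Gu x - Gv x) has_derivative (\<lambda>h. Hu y h - Hv y h)) (at y)"
      using has_derivative_diff[OF dGu[OF \<open>y \<in> U\<close>] dGv[OF \<open>y \<in> U\<close>]] .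
    show "0 \<le> (\<Sum>i\<in>Basis. (Hu y i - Hv y i) \<bullet> i)"
      using laplacian[OF \<open>y \<in> U\<close>] by (simp add: inner_diff_left sum_subtractf)
  next
    show "u y - v y \<le> 0" if "y \<in> frontier U" for y using boundary[OF that] by simp
  qed (rule x)
  then show ?thesis by simp
qed

section \<open>Torsion solutions\<close>

lemma torsion_solutionE:
  assumes "torsion_solution \<Omega> u g"
  obtains H where "continuous_on (closure \<Omega>) u" "\<And>x. x \<in> frontier \<Omega> \<Longrightarrow> u x = 0"
    "\<And>x. x \<in> \<Omega> \<Longrightarrow> (u has_derivative (\<lambda>h. g x \<bullet> h)) (at x)"
    "\<And>x. x \<in> \<Omega> \<Longrightarrow> (g has_derivative H x) (at x)"
    "\<And>x. x \<in> \<Omega> \<Longrightarrow> (\<Sum>i\<in>Basis. H x i \<bullet> i) = -1"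
proof -
  from assms obtain H where u: "continuous_on (closure \<Omega>) u" "\<And>x. x \<in> frontier \<Omega> \<Longrightarrow> u x = 0"
    "\<And>x. x \<in> \<Omega> \<Longrightarrow> (u has_derivative (\<lambda>h. g x \<bullet> h)) (at x)"
    "\<And>x. x \<in> \<Omega> \<Longrightarrow> (g has_derivative H x) (at x)"
    and lap: "\<And>x. x \<in> \<Omega> \<Longrightarrow> - (\<Sum>i\<in>Basis. H x i \<bullet> i) = 1"
    unfolding torsion_solution_def by blast
  show ?thesis
  proof (rule that[OF u])
    show "(\<Sum>i\<in>Basis. H x i \<bullet> i) = -1" if "x \<in> \<Omega>" for x
      using lap[OF that] by linarith
  qed
qed

lemma torsion_solution_nonneg:
  assumes \<Omega>: "open \<Omega>" "bounded \<Omega>" and u: "torsion_solution \<Omega> u g" and x: "x \<in> closure \<Omega>"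
  shows "u x \<ge> 0"
proof (cases "x \<in> \<Omega>")
  case True
  obtain H where "continuous_on (closure \<Omega>) u" "\<And>x. x \<in> frontier \<Omega> \<Longrightarrow> u x = 0"
    "\<And>x. x \<in> \<Omega> \<Longrightarrow> (u has_derivative (\<lambda>h. g x \<bullet> h)) (at x)"
    "\<And>x. x \<in> \<Omega> \<Longrightarrow> (g has_derivative H x) (at x)"
    "\<And>x. x \<in> \<Omega> \<Longrightarrow> (\<Sum>i\<in>Basis. H x i \<bullet> i) = -1"
    using torsion_solutionE[OF u] by blast
  then show ?thesis
    using comparison_principle[OF \<Omega>, of "\<lambda>_. 0" u "\<lambda>_. 0" "\<lambda>_ _. 0" g H] True by simp
next
  case False
  then show ?thesis
    using u x \<Omega>(1) by (auto simp: torsion_solution_def frontier_def interior_open)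
qed

lemma frontier_Int_translation:
  fixes \<Omega> :: "'a::real_normed_vector set"
  assumes "open \<Omega>" and y: "y \<in> frontier (\<Omega> \<inter> (\<lambda>x. x - h) ` \<Omega>)"
  shows "y + h \<in> frontier \<Omega> \<and> y \<in> closure \<Omega> \<or> y \<in> frontier \<Omega> \<and> y + h \<in> \<Omega>"
proof -
  have "open (\<Omega> \<inter> (\<lambda>x. x - h) ` \<Omega>)"
    using assms(1) open_translation_subtract[of \<Omega> h] by blast
  then have "y \<in> closure (\<Omega> \<inter> (\<lambda>x. x - h) ` \<Omega>)" "y \<notin> \<Omega> \<inter> (\<lambda>x. x - h) ` \<Omega>"
    using y unfolding frontier_def interior_open[OF \<open>open (\<Omega> \<inter> _)\<close>] by simp_all
  moreover have "closure (\<Omega> \<inter> (\<lambda>x. x - h) ` \<Omega>) \<subseteq> closure \<Omega> \<inter> (\<lambda>x. x - h) ` closure \<Omega>"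
    unfolding closure_translation_subtract[symmetric] by (intro Int_greatest closure_mono) auto
  moreover have "y \<in> (\<lambda>x. x - h) ` S \<longleftrightarrow> y + h \<in> S" for S by force
  ultimately show ?thesis using assms(1) by (auto simp: frontier_def interior_open)
qed

text \<open>Both \<open>u (\<cdot> + h)\<close> and \<open>u + M\<close> solve the torsion equation on \<open>\<Omega> \<inter> (\<Omega> - h)\<close>; on the
  boundary of that set either \<open>u (y + h) = 0 \<le> u y\<close> or \<open>u y = 0\<close> and the growth bound at the
  boundary point \<open>y\<close> applies.\<close>

lemma torsion_solution_increment_le:
  assumes \<Omega>: "open \<Omega>" "bounded \<Omega>" and u: "torsion_solution \<Omega> u g" and L: "L \<ge> 0"
    and growth: "\<And>p y. p \<in> frontier \<Omega> \<Longrightarrow> y \<in> \<Omega> \<Longrightarrow> u y \<le> L * norm (y - p) + (norm (y - p))\<^sup>2 / 2"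
    and x: "x \<in> \<Omega>" "x + h \<in> \<Omega>"
  shows "u (x + h) - u x \<le> L * norm h + (norm h)\<^sup>2 / 2"
proof -
  obtain H where cu: "continuous_on (closure \<Omega>) u" and u0: "\<And>x. x \<in> frontier \<Omega> \<Longrightarrow> u x = 0"
    and du: "\<And>x. x \<in> \<Omega> \<Longrightarrow> (u has_derivative (\<lambda>h. g x \<bullet> h)) (at x)"
    and dg: "\<And>x. x \<in> \<Omega> \<Longrightarrow> (g has_derivative H x) (at x)"
    and lap: "\<And>x. x \<in> \<Omega> \<Longrightarrow> (\<Sum>i\<in>Basis. H x i \<bullet> i) = -1"
    using torsion_solutionE[OF u] by blast
  define M where "M = L * norm h + (norm h)\<^sup>2 / 2"
  define U where "U = \<Omega> \<inter> (\<lambda>y. y - h) ` \<Omega>"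
  have memU: "y \<in> U \<longleftrightarrow> y \<in> \<Omega> \<and> y + h \<in> \<Omega>" for y
    by (force simp: U_def)
  have U: "open U" "bounded U"
    using \<Omega> open_translation_subtract[of \<Omega> h] by (auto simp: U_def intro: bounded_subset)
  have clU: "closure U \<subseteq> closure \<Omega> \<inter> (\<lambda>y. y - h) ` closure \<Omega>"
    unfolding U_def closure_translation_subtract[symmetric] by (intro Int_greatest closure_mono) auto
  have shift: "((\<lambda>y. y + h) has_derivative (\<lambda>k. k)) (at y)" for y
    by (auto intro!: derivative_eq_intros)
  have "u (x + h) \<le> u x + M"
  proof (rule comparison_principle[OF U, where Gu = "\<lambda>y. g (y + h)" and Hu = "\<lambda>y. H (y + h)"
        and Gv = g and Hv = H])
    show "continuous_on (closure U) (\<lambda>y. u (y + h))"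
      using clU by (intro continuous_on_compose2[OF cu]) (auto intro!: continuous_intros)
    show "continuous_on (closure U) (\<lambda>y. u y + M)"
      using clU by (auto intro!: continuous_intros intro: continuous_on_subset[OF cu])
    fix y assume "y \<in> U"
    then have "y \<in> \<Omega>" "y + h \<in> \<Omega>" by (auto simp: memU)
    show "((\<lambda>y. u (y + h)) has_derivative (\<lambda>k. g (y + h) \<bullet> k)) (at y)"
      using diff_chain_at[OF shift du[OF \<open>y + h \<in> \<Omega>\<close>]] by (simp add: o_def)
    show "((\<lambda>y. g (y + h)) has_derivative H (y + h)) (at y)"
      using diff_chain_at[OF shift dg[OF \<open>y + h \<in> \<Omega>\<close>]] by (simp add: o_def)
    show "((\<lambda>y. u y + M) has_derivative (\<lambda>k. g y \<bullet> k)) (at y)"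
      using du[OF \<open>y \<in> \<Omega>\<close>] by (rule has_derivative_add_const)
    show "(g has_derivative H y) (at y)" by (rule dg[OF \<open>y \<in> \<Omega>\<close>])
    show "(\<Sum>i\<in>Basis. H y i \<bullet> i) \<le> (\<Sum>i\<in>Basis. H (y + h) i \<bullet> i)"
      using lap \<open>y \<in> \<Omega>\<close> \<open>y + h \<in> \<Omega>\<close> by simp
  next
    fix y assume "y \<in> frontier U"
    from frontier_Int_translation[OF \<Omega>(1) this[unfolded U_def]]
    show "u (y + h) \<le> u y + M"
    proof (elim disjE conjE)
      assume "y + h \<in> frontier \<Omega>" "y \<in> closure \<Omega>"
      then have "u (y + h) = 0" "u y \<ge> 0" using u0 torsion_solution_nonneg[OF \<Omega> u] by auto
      moreover have "0 \<le> M" using L by (simp add: M_def)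
      ultimately show ?thesis by simp
    next
      assume "y \<in> frontier \<Omega>" "y + h \<in> \<Omega>"
      then show ?thesis using u0 growth by (fastforce simp: M_def)
    qed
  qed (use x memU in simp)
  then show ?thesis by (simp add: M_def)
qed

lemma torsion_solution_gradient_le:
  assumes \<Omega>: "open \<Omega>" "bounded \<Omega>" and u: "torsion_solution \<Omega> u g" and L: "L \<ge> 0"
    and growth: "\<And>p y. p \<in> frontier \<Omega> \<Longrightarrow> y \<in> \<Omega> \<Longrightarrow> u y \<le> L * norm (y - p) + (norm (y - p))\<^sup>2 / 2"
    and x: "x \<in> \<Omega>"
  shows "norm (g x) \<le> L"
proof (rule ccontr)
  assume "\<not> norm (g x) \<le> L"
  then have "g x \<noteq> 0" using L by auto
  define e where "e = (1 / norm (g x)) *\<^sub>R g x"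
  have "norm e = 1" "g x \<bullet> e = norm (g x)"
    using \<open>g x \<noteq> 0\<close> by (simp_all add: e_def dot_square_norm power2_eq_square)
  define \<phi> where "\<phi> \<tau> = u (x + \<tau> *\<^sub>R e) - L * \<tau> - \<tau>\<^sup>2 / 2" for \<tau>
  have "((\<lambda>\<tau>. x + \<tau> *\<^sub>R e) has_derivative (\<lambda>t. t *\<^sub>R e)) (at 0)"
    by (auto intro!: derivative_eq_intros)
  from diff_chain_at[OF this, of u "\<lambda>h. g x \<bullet> h"]
  have "((\<lambda>\<tau>. u (x + \<tau> *\<^sub>R e)) has_derivative (\<lambda>t. t * norm (g x))) (at 0)"
    using u x \<open>g x \<bullet> e = norm (g x)\<close> by (auto elim!: torsion_solutionE simp: o_def)
  then have "(\<phi> has_real_derivative (norm (g x) - L)) (at 0)"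
    unfolding \<phi>_def has_field_derivative_def
    by (auto intro!: derivative_eq_intros simp: fun_eq_iff algebra_simps)
  then obtain d where d: "d > 0" "\<And>h. h > 0 \<Longrightarrow> h < d \<Longrightarrow> \<phi> 0 < \<phi> h"
    using DERIV_pos_inc_right \<open>\<not> norm (g x) \<le> L\<close> by (smt (verit))
  obtain \<delta> where "\<delta> > 0" "ball x \<delta> \<subseteq> \<Omega>" using \<Omega>(1) x open_contains_ball by blast
  define \<tau> where "\<tau> = min d \<delta> / 2"
  have \<tau>: "\<tau> > 0" "\<tau> < d" "x + \<tau> *\<^sub>R e \<in> \<Omega>"
    using d \<open>\<delta> > 0\<close> \<open>ball x \<delta> \<subseteq> \<Omega>\<close> \<open>norm e = 1\<close> by (auto simp: \<tau>_def dist_norm)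
  have "\<phi> \<tau> \<le> \<phi> 0"
    using torsion_solution_increment_le[OF \<Omega> u L growth x \<tau>(3)] \<tau>(1) \<open>norm e = 1\<close>
    by (simp add: \<phi>_def)
  with d(2)[OF \<tau>(1,2)] show False by simp
qed

section \<open>The boundary barrier\<close>

definition torsion_barrier :: "real^2 \<Rightarrow> real^2 \<Rightarrow> real \<Rightarrow> real \<Rightarrow> real^2 \<Rightarrow> real" where
  "torsion_barrier c z R s y =
     (R\<^sup>2 - (y - c) \<bullet> (y - c)) / 4 + s\<^sup>2 / 2 * ln ((y - z) \<bullet> (y - z) / s\<^sup>2)"

definition torsion_barrier_grad :: "real^2 \<Rightarrow> real^2 \<Rightarrow> real \<Rightarrow> real^2 \<Rightarrow> real^2" where
  "torsion_barrier_grad c z s y = (s\<^sup>2 / ((y - z) \<bullet> (y - z))) *\<^sub>R (y - z) - (1 / 2) *\<^sub>R (y - c)"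

definition torsion_barrier_hessian :: "real^2 \<Rightarrow> real \<Rightarrow> real^2 \<Rightarrow> real^2 \<Rightarrow> real^2" where
  "torsion_barrier_hessian z s y h =
     (s\<^sup>2 / ((y - z) \<bullet> (y - z)) - 1 / 2) *\<^sub>R h
     - (2 * s\<^sup>2 * ((y - z) \<bullet> h) / ((y - z) \<bullet> (y - z))\<^sup>2) *\<^sub>R (y - z)"

lemma has_derivative_torsion_barrier:
  assumes "y \<noteq> z" "s \<noteq> 0"
  shows "(torsion_barrier c z R s has_derivative (\<lambda>h. torsion_barrier_grad c z s y \<bullet> h)) (at y)"
proof -
  have N: "(y - z) \<bullet> (y - z) > 0" using assms by simp
  show ?thesis
    unfolding torsion_barrier_def[abs_def] torsion_barrier_grad_def
    apply (rule has_derivative_eq_rhs)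
    apply (auto intro!: derivative_eq_intros simp: N assms)[1]
    apply (rule ext)
    subgoal for h
      using N assms(2) unfolding inner_diff_left[of "_ *\<^sub>R _"] inner_scaleR_left
      by (simp add: inner_commute[of h] field_simps power2_eq_square)
    done
qed

lemma has_derivative_torsion_barrier_grad:
  assumes "y \<noteq> z"
  shows "(torsion_barrier_grad c z s has_derivative torsion_barrier_hessian z s y) (at y)"
proof -
  have N: "(y - z) \<bullet> (y - z) > 0" using assms by simp
  show ?thesis
    unfolding torsion_barrier_grad_def[abs_def] torsion_barrier_hessian_def[abs_def]
    apply (rule has_derivative_eq_rhs)
    apply (auto intro!: derivative_eq_intros simp: N assms)[1]
    apply (rule ext)
    subgoal for h
      by (simp add: inner_commute[of h] scaleR_diff_left power2_eq_square)
    done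
qed

lemma torsion_barrier_hessian_trace:
  assumes "y \<noteq> z"
  shows "(\<Sum>i\<in>Basis. torsion_barrier_hessian z s y i \<bullet> i) = -1"
proof -
  define w where "w = y - z"
  have N: "w \<bullet> w > 0" using assms by (simp add: w_def)
  have "(\<Sum>i\<in>Basis. torsion_barrier_hessian z s y i \<bullet> i) =
     (\<Sum>i\<in>(Basis::(real^2) set). s\<^sup>2 / (w \<bullet> w) - 1 / 2 - 2 * s\<^sup>2 / (w \<bullet> w)\<^sup>2 * ((w \<bullet> i) * (w \<bullet> i)))"
    by (intro sum.cong)
      (auto simp: torsion_barrier_hessian_def w_def[symmetric] inner_diff_right inner_commute inner_Basis)
  also have "\<dots> = 2 * (s\<^sup>2 / (w \<bullet> w) - 1 / 2) - 2 * s\<^sup>2 / (w \<bullet> w)\<^sup>2 * (w \<bullet> w)"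
    using euclidean_inner[of w w]
    by (simp add: sum_subtractf sum_distrib_left[symmetric] sum_divide_distrib[symmetric])
  also have "\<dots> = -1" using N by (simp add: field_simps power2_eq_square)
  finally show ?thesis .
qed

lemma torsion_barrier_normal_form:
  assumes "norm \<nu> = 1"
  shows "torsion_barrier (p + R *\<^sub>R \<nu>) (p - s *\<^sub>R \<nu>) R s y =
    (2 * R * ((y - p) \<bullet> \<nu>) - (y - p) \<bullet> (y - p)) / 4
    + s\<^sup>2 / 2 * ln (((y - p) \<bullet> (y - p) + 2 * s * ((y - p) \<bullet> \<nu>) + s\<^sup>2) / s\<^sup>2)"
proof -
  have "\<nu> \<bullet> \<nu> = 1" using assms by (simp add: dot_square_norm)
  then have "(y - (p + R *\<^sub>R \<nu>)) \<bullet> (y - (p + R *\<^sub>R \<nu>)) = (y - p) \<bullet> (y - p) - 2 * R * ((y - p) \<bullet> \<nu>) + R\<^sup>2"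
    and "(y - (p - s *\<^sub>R \<nu>)) \<bullet> (y - (p - s *\<^sub>R \<nu>)) = (y - p) \<bullet> (y - p) + 2 * s * ((y - p) \<bullet> \<nu>) + s\<^sup>2"
    by (simp_all add: inner_diff_left inner_diff_right inner_add_left inner_add_right
        inner_commute power2_eq_square algebra_simps)
  then show ?thesis unfolding torsion_barrier_def by simp
qed

lemma ln_one_plus_ge_half:
  fixes x :: real
  assumes "0 \<le> x" "x \<le> 1"
  shows "x / 2 \<le> ln (1 + x)"
proof -
  have "1 - 1 / (1 + x) \<le> ln (1 + x)"
    using ln_le_minus_one[of "1 / (1 + x)"] assms by (simp add: ln_div)
  then have "x / (1 + x) \<le> ln (1 + x)"
    using assms by (simp add: field_simps)
  moreover have "x / 2 \<le> x / (1 + x)"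
    using assms by (intro divide_left_mono) auto
  ultimately show ?thesis by linarith
qed

text \<open>The barrier in coordinates \<open>t\<close> (normal to the supporting line) and \<open>q\<close> (tangential),
  for a point of an annulus of width \<open>l\<close>. Once \<open>q \<ge> s = 20 l\<close>, the error terms \<open>l\<^sup>2 + 2 l q\<close>
  are at most \<open>(1/20\<^sup>2 + 2/20) q\<^sup>2 = (41/400) q\<^sup>2\<close>; this is where the factor \<open>400/359\<close> comes
  from. For \<open>q < s\<close> the logarithm pays for \<open>q\<^sup>2\<close>.\<close>

lemma barrier_profile_nonneg:
  fixes t q R l :: real
  assumes t: "0 \<le> t" "t \<le> 2 * R" and q: "0 \<le> q" and l: "0 < l"
    and near: "q\<^sup>2 + t\<^sup>2 \<le> l\<^sup>2 + 2 * l * q + 2 * t * R"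
  shows "0 \<le> (2 * (400 * R / 359) * t - (q\<^sup>2 + t\<^sup>2)) / 4
    + (20 * l)\<^sup>2 / 2 * ln ((q\<^sup>2 + t\<^sup>2 + 2 * (20 * l) * t + (20 * l)\<^sup>2) / (20 * l)\<^sup>2)"
proof -
  define s where "s = 20 * l"
  have "s > 0" using l by (simp add: s_def)
  define \<Lambda> where "\<Lambda> = ln ((q\<^sup>2 + t\<^sup>2 + 2 * s * t + s\<^sup>2) / s\<^sup>2)"
  have "1 + q\<^sup>2 / s\<^sup>2 \<le> (q\<^sup>2 + t\<^sup>2 + 2 * s * t + s\<^sup>2) / s\<^sup>2"
    using \<open>s > 0\<close> t by (simp add: field_simps)
  moreover have "0 < 1 + q\<^sup>2 / s\<^sup>2" by (simp add: add_pos_nonneg)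
  ultimately have log: "ln (1 + q\<^sup>2 / s\<^sup>2) \<le> \<Lambda>"
    unfolding \<Lambda>_def by (subst ln_le_cancel_iff) linarith+
  consider "s \<le> q" | "q < s" by linarith
  then have "0 \<le> (2 * (400 * R / 359) * t - (q\<^sup>2 + t\<^sup>2)) / 4 + s\<^sup>2 / 2 * \<Lambda>"
  proof cases
    case 1
    then have "l \<le> q / 20" by (simp add: s_def)
    then have "l\<^sup>2 \<le> q\<^sup>2 / 400" "2 * l * q \<le> q\<^sup>2 / 10"
      using l q power_mono[of l "q / 20" 2] mult_right_mono[of l "q / 20" q]
      by (auto simp: power2_eq_square)
    then have "359 / 400 * q\<^sup>2 + t\<^sup>2 \<le> 2 * t * R" using near by linarith
    then have "q\<^sup>2 + t\<^sup>2 \<le> 400 / 359 * (2 * t * R)" using zero_le_power2[of t] by linarith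
    then have "q\<^sup>2 + t\<^sup>2 \<le> 2 * (400 * R / 359) * t" by (simp add: field_simps)
    moreover have "0 \<le> ln (1 + q\<^sup>2 / s\<^sup>2)" by (intro ln_ge_zero) simp
    then have "0 \<le> \<Lambda>" using log by linarith
    ultimately show ?thesis by (intro add_nonneg_nonneg) auto
  next
    case 2
    then have "q\<^sup>2 / s\<^sup>2 \<le> 1" using q \<open>s > 0\<close> by (simp add: power_mono)
    then have "q\<^sup>2 / 4 \<le> s\<^sup>2 / 2 * \<Lambda>"
      using ln_one_plus_ge_half[of "q\<^sup>2 / s\<^sup>2"] log \<open>s > 0\<close>
        mult_left_mono[of "q\<^sup>2 / s\<^sup>2 / 2" \<Lambda> "s\<^sup>2 / 2"]
      by simp
    moreover have "t * t \<le> (2 * (400 * R / 359)) * t"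
      using t by (intro mult_right_mono) auto
    then have "t\<^sup>2 \<le> 2 * (400 * R / 359) * t" by (simp add: power2_eq_square)
    ultimately show ?thesis by (simp add: field_simps)
  qed
  then show ?thesis by (simp add: s_def \<Lambda>_def)
qed

lemma barrier_profile_le:
  fixes t D R s :: real
  assumes "0 \<le> t" "0 \<le> D" "0 < s"
  shows "(2 * R * t - D) / 4 + s\<^sup>2 / 2 * ln ((D + 2 * s * t + s\<^sup>2) / s\<^sup>2) \<le> (R / 2 + s) * t + D / 2"
proof -
  have "ln ((D + 2 * s * t + s\<^sup>2) / s\<^sup>2) \<le> (D + 2 * s * t + s\<^sup>2) / s\<^sup>2 - 1"
    using assms by (intro ln_le_minus_one) (simp add: add_nonneg_pos)
  also have "\<dots> = (D + 2 * s * t) / s\<^sup>2" using assms by (simp add: field_simps)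
  finally have "ln ((D + 2 * s * t + s\<^sup>2) / s\<^sup>2) \<le> (D + 2 * s * t) / s\<^sup>2" .
  from mult_left_mono[OF this, of "s\<^sup>2 / 2"]
  have "s\<^sup>2 / 2 * ln ((D + 2 * s * t + s\<^sup>2) / s\<^sup>2) \<le> s\<^sup>2 / 2 * ((D + 2 * s * t) / s\<^sup>2)"
    by simp
  also have "\<dots> = D / 2 + s * t" using assms by (simp add: field_simps power2_eq_square)
  finally show ?thesis using assms by (simp add: field_simps)
qed

lemma annulus_normal_coordinates:
  fixes p c y \<nu> :: "'a::real_inner"
  assumes \<nu>: "norm \<nu> = 1" and t: "0 \<le> (y - p) \<bullet> \<nu>"
    and y: "norm (y - c) \<le> R" and p: "norm (c - p) \<le> R"
    and r: "r \<le> (c - p) \<bullet> \<nu>" "0 \<le> r" and width: "R\<^sup>2 - r\<^sup>2 \<le> l\<^sup>2" and l: "0 \<le> l"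
  defines "t \<equiv> (y - p) \<bullet> \<nu>" and "q \<equiv> norm ((y - p) - ((y - p) \<bullet> \<nu>) *\<^sub>R \<nu>)"
  shows "t \<le> 2 * R" and "q\<^sup>2 + t\<^sup>2 = (y - p) \<bullet> (y - p)"
    and "q\<^sup>2 + t\<^sup>2 \<le> l\<^sup>2 + 2 * l * q + 2 * t * R"
proof -
  define d e where "d = y - p" and "e = c - p"
  define b where "b = e \<bullet> \<nu>"
  define d\<^sub>t e\<^sub>t where "d\<^sub>t = d - t *\<^sub>R \<nu>" and "e\<^sub>t = e - b *\<^sub>R \<nu>"
  have "\<nu> \<bullet> \<nu> = 1" using \<nu> by (simp add: dot_square_norm)
  then have dd: "d\<^sub>t \<bullet> d\<^sub>t = d \<bullet> d - t\<^sup>2" and ee: "e\<^sub>t \<bullet> e\<^sub>t = e \<bullet> e - b\<^sup>2"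
    and de: "d \<bullet> e = t * b + d\<^sub>t \<bullet> e\<^sub>t"
    by (simp_all add: d\<^sub>t_def e\<^sub>t_def t_def d_def b_def inner_diff_left inner_diff_right
        inner_commute power2_eq_square)
  have "b \<le> R" using norm_cauchy_schwarz[of e \<nu>] \<nu> p by (simp add: b_def e_def)
  have "(d - e) \<bullet> \<nu> \<le> R" using norm_cauchy_schwarz[of "d - e" \<nu>] \<nu> y by (simp add: d_def e_def)
  then show "t \<le> 2 * R"
    using \<open>b \<le> R\<close> by (simp add: t_def b_def d_def e_def inner_diff_left)
  show "q\<^sup>2 + t\<^sup>2 = (y - p) \<bullet> (y - p)"
    using dd by (simp add: q_def t_def d\<^sub>t_def d_def power2_norm_eq_inner)
  have "e \<bullet> e \<le> R\<^sup>2" using p by (simp add: e_def power2_norm_eq_inner[symmetric] power_mono)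
  moreover have "r\<^sup>2 \<le> b\<^sup>2" using r by (simp add: b_def e_def power_mono)
  ultimately have "(norm e\<^sub>t)\<^sup>2 \<le> l\<^sup>2"
    using ee width by (simp add: power2_norm_eq_inner)
  then have "norm e\<^sub>t \<le> l" using l by (rule power2_le_imp_le)
  have "norm d\<^sub>t = q" by (simp add: q_def t_def d\<^sub>t_def d_def)
  have "d\<^sub>t \<bullet> e\<^sub>t \<le> norm d\<^sub>t * norm e\<^sub>t" by (rule norm_cauchy_schwarz)
  also have "\<dots> \<le> norm d\<^sub>t * l" using \<open>norm e\<^sub>t \<le> l\<close> by (simp add: mult_left_mono)
  finally have "d\<^sub>t \<bullet> e\<^sub>t \<le> l * q" using \<open>norm d\<^sub>t = q\<close> by (simp add: mult.commute)
  moreover have "(d - e) \<bullet> (d - e) \<le> R\<^sup>2"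
    using y by (simp add: d_def e_def power2_norm_eq_inner[symmetric] power_mono)
  moreover have "(d - e) \<bullet> (d - e) = d \<bullet> d - 2 * (d \<bullet> e) + e \<bullet> e"
    by (simp add: inner_diff_left inner_diff_right inner_commute)
  moreover have "t * b \<le> t * R" using \<open>b \<le> R\<close> t by (simp add: t_def mult_left_mono)
  moreover have "0 \<le> e\<^sub>t \<bullet> e\<^sub>t" by simp
  moreover have "q\<^sup>2 + t\<^sup>2 = d \<bullet> d" using \<open>q\<^sup>2 + t\<^sup>2 = (y - p) \<bullet> (y - p)\<close> by (simp add: d_def)
  ultimately show "q\<^sup>2 + t\<^sup>2 \<le> l\<^sup>2 + 2 * l * q + 2 * t * R"
    using ee de width \<open>r\<^sup>2 \<le> b\<^sup>2\<close> by linarith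
qed

lemma torsion_barrier_nonneg:
  fixes p c y \<nu> :: "real^2"
  assumes \<nu>: "norm \<nu> = 1" and t: "0 \<le> (y - p) \<bullet> \<nu>"
    and "norm (y - c) \<le> R" "norm (c - p) \<le> R" "r \<le> (c - p) \<bullet> \<nu>" "0 \<le> r"
    and "R\<^sup>2 - r\<^sup>2 \<le> l\<^sup>2" and l: "0 < l"
  shows "0 \<le> torsion_barrier (p + (400 * R / 359) *\<^sub>R \<nu>) (p - (20 * l) *\<^sub>R \<nu>) (400 * R / 359) (20 * l) y"
proof -
  note coordinates = annulus_normal_coordinates[OF assms(1-7) less_imp_le[OF l]]
  show ?thesis
    unfolding torsion_barrier_normal_form[OF \<nu>] coordinates(2)[symmetric]
    by (rule barrier_profile_nonneg[OF t coordinates(1) norm_ge_zero l coordinates(3)])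
qed

lemma torsion_barrier_le:
  fixes p y \<nu> :: "real^2"
  assumes \<nu>: "norm \<nu> = 1" and t: "0 \<le> (y - p) \<bullet> \<nu>" and "0 < s" "0 \<le> R"
  shows "torsion_barrier (p + R *\<^sub>R \<nu>) (p - s *\<^sub>R \<nu>) R s y
    \<le> (R / 2 + s) * norm (y - p) + (norm (y - p))\<^sup>2 / 2"
proof -
  have "torsion_barrier (p + R *\<^sub>R \<nu>) (p - s *\<^sub>R \<nu>) R s y
      \<le> (R / 2 + s) * ((y - p) \<bullet> \<nu>) + (y - p) \<bullet> (y - p) / 2"
    unfolding torsion_barrier_normal_form[OF \<nu>] by (rule barrier_profile_le[OF t _ \<open>0 < s\<close>]) simp
  also have "(y - p) \<bullet> \<nu> \<le> norm (y - p)"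
    using norm_cauchy_schwarz[of "y - p" \<nu>] \<nu> by simp
  then have "(R / 2 + s) * ((y - p) \<bullet> \<nu>) \<le> (R / 2 + s) * norm (y - p)"
    using assms by (intro mult_left_mono) auto
  finally show ?thesis by (simp add: power2_norm_eq_inner)
qed

lemma convex_supporting_halfspace:
  fixes S :: "'a::euclidean_space set"
  assumes "convex S" "z \<notin> S"
  obtains \<nu> where "norm \<nu> = 1" "\<And>x. x \<in> closure S \<Longrightarrow> 0 \<le> (x - z) \<bullet> \<nu>"
proof -
  obtain a where "a \<noteq> 0" and a: "\<forall>x\<in>(+) (- z) ` S. 0 \<le> a \<bullet> x"
    using separating_hyperplane_set_0[of "(+) (- z) ` S"] assms convex_translation by force
  define \<nu> where "\<nu> = a /\<^sub>R norm a"
  have "S \<subseteq> {x. 0 \<le> (x - z) \<bullet> \<nu>}"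
    using a \<open>a \<noteq> 0\<close> by (auto simp: \<nu>_def inner_commute)
  then have closure: "closure S \<subseteq> {x. 0 \<le> (x - z) \<bullet> \<nu>}"
    by (rule closure_minimal) (intro closed_Collect_le continuous_intros)
  show ?thesis
  proof (rule that)
    show "norm \<nu> = 1" using \<open>a \<noteq> 0\<close> by (simp add: \<nu>_def)
    show "0 \<le> (x - z) \<bullet> \<nu>" if "x \<in> closure S" for x
      using that closure by blast
  qed
qed

lemma supporting_halfspace_toward_ball:
  fixes \<Omega> :: "'a::euclidean_space set"
  assumes "convex \<Omega>" "p \<notin> \<Omega>" "ball c r \<subseteq> \<Omega>" "0 < r"
  obtains \<nu> where "norm \<nu> = 1" "\<And>x. x \<in> closure \<Omega> \<Longrightarrow> 0 \<le> (x - p) \<bullet> \<nu>" "r \<le> (c - p) \<bullet> \<nu>"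
proof -
  obtain \<nu> where \<nu>: "norm \<nu> = 1" and halfspace: "\<And>x. x \<in> closure \<Omega> \<Longrightarrow> 0 \<le> (x - p) \<bullet> \<nu>"
    using convex_supporting_halfspace[OF assms(1,2)] by blast
  have "c - r *\<^sub>R \<nu> \<in> closure (ball c r)" using \<nu> assms(4) by (simp add: dist_norm)
  then have "0 \<le> (c - r *\<^sub>R \<nu> - p) \<bullet> \<nu>" using halfspace closure_mono[OF assms(3)] by blast
  then have "r \<le> (c - p) \<bullet> \<nu>" using \<nu> by (simp add: inner_diff_left dot_square_norm algebra_simps)
  then show ?thesis using that \<nu> halfspace by blast
qed

lemma torsion_solution_le_barrier:
  assumes \<Omega>: "open \<Omega>" "bounded \<Omega>" and u: "torsion_solution \<Omega> u g"
    and pole: "z \<notin> closure \<Omega>" and "s \<noteq> 0"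
    and boundary: "\<And>x. x \<in> frontier \<Omega> \<Longrightarrow> 0 \<le> torsion_barrier c z R s x"
    and y: "y \<in> \<Omega>"
  shows "u y \<le> torsion_barrier c z R s y"
proof -
  obtain H where cu: "continuous_on (closure \<Omega>) u" and u0: "\<And>x. x \<in> frontier \<Omega> \<Longrightarrow> u x = 0"
    and du: "\<And>x. x \<in> \<Omega> \<Longrightarrow> (u has_derivative (\<lambda>h. g x \<bullet> h)) (at x)"
    and dg: "\<And>x. x \<in> \<Omega> \<Longrightarrow> (g has_derivative H x) (at x)"
    and lap: "\<And>x. x \<in> \<Omega> \<Longrightarrow> (\<Sum>i\<in>Basis. H x i \<bullet> i) = -1"
    using torsion_solutionE[OF u] by blast
  have "x \<noteq> z" if "x \<in> closure \<Omega>" for x using that pole by blast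
  note dv = has_derivative_torsion_barrier[OF this \<open>s \<noteq> 0\<close>]
    and dGv = has_derivative_torsion_barrier_grad[OF this]
    and trace = torsion_barrier_hessian_trace[OF this]
  show ?thesis
  proof (rule comparison_principle[OF \<Omega> cu _ du dg, where Gv = "torsion_barrier_grad c z s"
        and Hv = "torsion_barrier_hessian z s"])
    show "continuous_on (closure \<Omega>) (torsion_barrier c z R s)"
      using dv by (intro continuous_at_imp_continuous_on ballI has_derivative_continuous)
    fix x assume "x \<in> \<Omega>"
    then have "x \<in> closure \<Omega>" using closure_subset by blast
    show "(torsion_barrier c z R s has_derivative (\<lambda>h. torsion_barrier_grad c z s x \<bullet> h)) (at x)"
      by (rule dv[OF \<open>x \<in> closure \<Omega>\<close>])
    show "(torsion_barrier_grad c z s has_derivative torsion_barrier_hessian z s x) (at x)"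
      by (rule dGv[OF \<open>x \<in> closure \<Omega>\<close>])
    show "(\<Sum>i\<in>Basis. torsion_barrier_hessian z s x i \<bullet> i) \<le> (\<Sum>i\<in>Basis. H x i \<bullet> i)"
      using lap[OF \<open>x \<in> \<Omega>\<close>] trace[OF \<open>x \<in> closure \<Omega>\<close>] by simp
  next
    show "u x \<le> torsion_barrier c z R s x" if "x \<in> frontier \<Omega>" for x
      using u0[OF that] boundary[OF that] by simp
  qed (simp_all add: y)
qed

lemma torsion_solution_boundary_growth:
  assumes \<Omega>: "open \<Omega>" "convex \<Omega>" and u: "torsion_solution \<Omega> u g"
    and inner: "ball c r \<subseteq> \<Omega>" and outer: "\<Omega> \<subseteq> ball c R"
    and r: "0 < r" and width: "R\<^sup>2 - r\<^sup>2 \<le> l\<^sup>2" and l: "0 < l"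
    and p: "p \<in> frontier \<Omega>" and y: "y \<in> \<Omega>"
  shows "u y \<le> (200 * R / 359 + 20 * l) * norm (y - p) + (norm (y - p))\<^sup>2 / 2"
proof -
  have "bounded \<Omega>" using outer bounded_subset by blast
  have "p \<notin> \<Omega>" "p \<in> closure \<Omega>" using p \<Omega>(1) by (auto simp: frontier_def interior_open)
  then obtain \<nu> where \<nu>: "norm \<nu> = 1" and halfspace: "\<And>x. x \<in> closure \<Omega> \<Longrightarrow> 0 \<le> (x - p) \<bullet> \<nu>"
    and "r \<le> (c - p) \<bullet> \<nu>"
    using supporting_halfspace_toward_ball[OF \<Omega>(2) _ inner r] by blast
  have closure_outer: "closure \<Omega> \<subseteq> cball c R"
    using outer by (intro closure_minimal) auto
  then have "dist c p \<le> R" using \<open>p \<in> closure \<Omega>\<close> by auto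
  then have "norm (c - p) \<le> R" by (simp add: dist_norm)
  then have "R \<ge> 0" using norm_ge_zero[of "c - p"] by linarith
  define R' s where "R' = 400 * R / 359" and "s = 20 * l"
  have "s > 0" using l by (simp add: s_def)
  have "p - s *\<^sub>R \<nu> \<notin> closure \<Omega>"
    using halfspace[of "p - s *\<^sub>R \<nu>"] \<nu> \<open>s > 0\<close> by (auto simp: dot_square_norm)
  then have "u y \<le> torsion_barrier (p + R' *\<^sub>R \<nu>) (p - s *\<^sub>R \<nu>) R' s y"
  proof (rule torsion_solution_le_barrier[OF \<Omega>(1) \<open>bounded \<Omega>\<close> u _ _ _ y])
    show "s \<noteq> 0" using \<open>s > 0\<close> by simp
    fix x assume "x \<in> frontier \<Omega>"
    then have "x \<in> closure \<Omega>" by (simp add: frontier_def)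
    then show "0 \<le> torsion_barrier (p + R' *\<^sub>R \<nu>) (p - s *\<^sub>R \<nu>) R' s x"
      unfolding R'_def s_def using closure_outer
      by (intro torsion_barrier_nonneg[OF \<nu> halfspace _ \<open>norm (c - p) \<le> R\<close> \<open>r \<le> (c - p) \<bullet> \<nu>\<close>
            less_imp_le[OF r] width l]) (auto simp: dist_norm norm_minus_commute)
  qed
  also have "\<dots> \<le> (R' / 2 + s) * norm (y - p) + (norm (y - p))\<^sup>2 / 2"
    using \<open>R \<ge> 0\<close> y closure_subset
    by (intro torsion_barrier_le[OF \<nu> halfspace \<open>s > 0\<close>]) (auto simp: R'_def)
  finally show ?thesis by (simp add: R'_def s_def)
qed

lemma torsion_solution_gradient_le_annulus:
  assumes "open \<Omega>" "convex \<Omega>" and u: "torsion_solution \<Omega> u g"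
    and "ball c r \<subseteq> \<Omega>" "\<Omega> \<subseteq> ball c R" "0 < r" "R\<^sup>2 - r\<^sup>2 \<le> l\<^sup>2" "0 < l" and x: "x \<in> \<Omega>"
  shows "norm (g x) \<le> 200 * R / 359 + 20 * l"
proof (rule torsion_solution_gradient_le[OF \<open>open \<Omega>\<close> _ u _ _ x])
  show "bounded \<Omega>" using \<open>\<Omega> \<subseteq> ball c R\<close> bounded_subset by blast
  have "dist c x < R" using \<open>\<Omega> \<subseteq> ball c R\<close> x by auto
  then have "R > 0" using zero_le_dist[of c x] by linarith
  then show "0 \<le> 200 * R / 359 + 20 * l" using \<open>0 < l\<close> by simp
qed (use torsion_solution_boundary_growth[OF assms(1-8)] in blast)

section \<open>Convex domains close to a disk\<close>

lemma area_ball: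
  assumes "r \<ge> 0"
  shows "area (ball (c::real^2) r) = pi * r\<^sup>2"
proof -
  have "area (ball c r) = measure lborel (ball c r)"
    by (intro measure_completion) simp
  then show ?thesis using circle_area[of r c] assms by simp
qed

lemma area_symdiff_ge_ball:
  fixes \<Omega> :: "(real^2) set"
  assumes "open \<Omega>" "bounded \<Omega>" and sub: "ball m \<kappa> \<subseteq> (ball c \<rho> - \<Omega>) \<union> (\<Omega> - ball c \<rho>)"
    and "\<kappa> \<ge> 0"
  shows "pi * \<kappa>\<^sup>2 \<le> area ((ball c \<rho> - \<Omega>) \<union> (\<Omega> - ball c \<rho>))"
proof -
  have "\<Omega> \<in> sets lebesgue" using lmeasurable_open[OF assms(2,1)] by (simp add: fmeasurable_def)
  moreover have "ball c \<rho> \<in> sets lebesgue" by simp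
  ultimately have "(ball c \<rho> - \<Omega>) \<union> (\<Omega> - ball c \<rho>) \<in> sets lebesgue"
    by (intro sets.Un sets.Diff)
  then have "(ball c \<rho> - \<Omega>) \<union> (\<Omega> - ball c \<rho>) \<in> lmeasurable"
    using assms(2) by (intro bounded_set_imp_lmeasurable) auto
  then have "area (ball m \<kappa>) \<le> area ((ball c \<rho> - \<Omega>) \<union> (\<Omega> - ball c \<rho>))"
    using sub by (intro measure_mono_fmeasurable) auto
  then show ?thesis using area_ball[OF \<open>\<kappa> \<ge> 0\<close>] by simp
qed

text \<open>A point \<open>z \<notin> \<Omega>\<close> deep inside the disk puts the half of the disk beyond a supporting
  line at \<open>z\<close> outside \<open>\<Omega>\<close>; that half contains a disk of radius \<open>\<rho> \<eta> / 2\<close>.\<close>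

lemma convex_near_disk_contains_ball:
  fixes \<Omega> :: "(real^2) set"
  assumes \<Omega>: "open \<Omega>" "convex \<Omega>" "bounded \<Omega>" and \<rho>: "\<rho> > 0" and \<eta>: "0 < \<eta>" "\<eta> < 1"
    and small: "area ((ball c \<rho> - \<Omega>) \<union> (\<Omega> - ball c \<rho>)) < \<eta>\<^sup>2 / 4 * (pi * \<rho>\<^sup>2)"
  shows "ball c (\<rho> * (1 - \<eta>)) \<subseteq> \<Omega>"
proof (rule subsetI, rule ccontr)
  fix z assume z: "z \<in> ball c (\<rho> * (1 - \<eta>))" "z \<notin> \<Omega>"
  obtain \<nu> where \<nu>: "norm \<nu> = 1" and halfspace: "\<And>x. x \<in> closure \<Omega> \<Longrightarrow> 0 \<le> (x - z) \<bullet> \<nu>"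
    using convex_supporting_halfspace[OF \<Omega>(2) z(2)] by blast
  define \<kappa> where "\<kappa> = \<rho> * \<eta> / 2"
  define m where "m = c - (\<rho> - \<kappa>) *\<^sub>R \<nu>"
  have \<kappa>: "0 \<le> \<kappa>" "\<kappa> \<le> \<rho>" using \<rho> \<eta> by (auto simp: \<kappa>_def)
  have "ball m \<kappa> \<subseteq> (ball c \<rho> - \<Omega>) \<union> (\<Omega> - ball c \<rho>)"
  proof
    fix y assume y: "y \<in> ball m \<kappa>"
    have "dist c y \<le> dist c m + dist m y" by (rule dist_triangle)
    moreover have "dist c m = \<rho> - \<kappa>" using \<nu> \<kappa> by (simp add: m_def dist_norm)
    ultimately have "y \<in> ball c \<rho>" using y by (simp add: dist_commute)
    moreover have "(y - z) \<bullet> \<nu> < 0"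
    proof -
      have "(y - z) \<bullet> \<nu> = (y - m) \<bullet> \<nu> - (\<rho> - \<kappa>) + (c - z) \<bullet> \<nu>"
        using \<nu> by (simp add: m_def inner_diff_left dot_square_norm)
      moreover have "(y - m) \<bullet> \<nu> < \<kappa>"
        using norm_cauchy_schwarz[of "y - m" \<nu>] \<nu> y by (simp add: dist_norm norm_minus_commute)
      moreover have "(c - z) \<bullet> \<nu> < \<rho> * (1 - \<eta>)"
        using norm_cauchy_schwarz[of "c - z" \<nu>] \<nu> z(1) by (simp add: dist_norm)
      ultimately show ?thesis by (simp add: \<kappa>_def algebra_simps)
    qed
    then have "y \<notin> closure \<Omega>" using halfspace by force
    then have "y \<notin> \<Omega>" using closure_subset by blast
    ultimately show "y \<in> (ball c \<rho> - \<Omega>) \<union> (\<Omega> - ball c \<rho>)" by simp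
  qed
  from area_symdiff_ge_ball[OF \<Omega>(1,3) this \<kappa>(1)]
  have "pi * \<kappa>\<^sup>2 \<le> area ((ball c \<rho> - \<Omega>) \<union> (\<Omega> - ball c \<rho>))" .
  moreover have "pi * \<kappa>\<^sup>2 = \<eta>\<^sup>2 / 4 * (pi * \<rho>\<^sup>2)" by (simp add: \<kappa>_def power2_eq_square)
  ultimately show False using small by simp
qed

text \<open>A point of \<open>\<Omega>\<close> far outside the disk spans with the inner disk, by convexity, a cone
  that contains a disk of radius \<open>\<theta> \<rho> (1 - \<eta>)\<close> just outside \<open>ball c \<rho>\<close>.\<close>

lemma convex_near_disk_subset_ball:
  fixes \<Omega> :: "(real^2) set"
  assumes \<Omega>: "open \<Omega>" "convex \<Omega>" "bounded \<Omega>" and \<rho>: "\<rho> > 0" and \<eta>: "0 < \<eta>" "\<eta> < 1"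
    and inner: "ball c (\<rho> * (1 - \<eta>)) \<subseteq> \<Omega>"
    and small: "area ((ball c \<rho> - \<Omega>) \<union> (\<Omega> - ball c \<rho>))
      < \<eta>\<^sup>2 * (1 - \<eta>)\<^sup>2 / (4 * (1 + \<eta>)\<^sup>2) * (pi * \<rho>\<^sup>2)"
  shows "\<Omega> \<subseteq> ball c (\<rho> * (1 + \<eta>))"
proof (rule subsetI, rule ccontr)
  fix q assume "q \<in> \<Omega>" "q \<notin> ball c (\<rho> * (1 + \<eta>))"
  define A D where "A = \<rho> * (1 + \<eta>)" and "D = norm (q - c)"
  have "A \<le> D" "0 < A" using \<open>q \<notin> _\<close> \<rho> \<eta> by (auto simp: A_def D_def dist_norm norm_minus_commute)
  define e where "e = (1 / D) *\<^sub>R (q - c)"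
  have "D > 0" using \<open>A \<le> D\<close> \<open>0 < A\<close> by linarith
  then have "norm e = 1" by (simp add: e_def D_def)
  have "c \<in> \<Omega>" using inner \<rho> \<eta> by auto
  define q' where "q' = c + A *\<^sub>R e"
  have "q' = (1 - A / D) *\<^sub>R c + (A / D) *\<^sub>R q"
    using \<open>A \<le> D\<close> \<open>0 < A\<close> by (simp add: q'_def e_def algebra_simps)
  also have "\<dots> \<in> \<Omega>"
    using \<open>A \<le> D\<close> \<open>0 < A\<close> by (intro convexD[OF \<Omega>(2) \<open>c \<in> \<Omega>\<close> \<open>q \<in> \<Omega>\<close>]) auto
  finally have "q' \<in> \<Omega>" .
  define \<theta> where "\<theta> = \<eta> / (2 * (1 + \<eta>))"
  have \<theta>: "0 < \<theta>" "\<theta> < 1" using \<eta> by (auto simp: \<theta>_def field_simps)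
  define m where "m = c + ((1 - \<theta>) * A) *\<^sub>R e"
  define \<kappa> where "\<kappa> = \<theta> * \<rho> * (1 - \<eta>)"
  have \<kappa>: "0 \<le> \<kappa>" "\<kappa> \<le> \<rho> * \<eta> / 2"
    using \<theta> \<rho> \<eta> by (auto simp: \<kappa>_def \<theta>_def field_simps)
  have "(1 - \<theta>) * A = \<rho> * (1 + \<eta> / 2)" using \<eta> by (simp add: A_def \<theta>_def field_simps)
  have "ball m \<kappa> \<subseteq> (ball c \<rho> - \<Omega>) \<union> (\<Omega> - ball c \<rho>)"
  proof
    fix y assume y: "y \<in> ball m \<kappa>"
    then have "norm (y - m) < \<kappa>" by (simp add: dist_norm norm_minus_commute)
    have "norm (m - c) = \<rho> * (1 + \<eta> / 2)"
      using \<open>norm e = 1\<close> \<open>(1 - \<theta>) * A = _\<close> \<rho> \<eta> by (simp add: m_def)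
    moreover have "norm (m - c) \<le> norm (y - c) + norm (y - m)"
      using norm_triangle_ineq4[of "y - c" "y - m"] by simp
    ultimately have "y \<notin> ball c \<rho>"
      using \<open>norm (y - m) < \<kappa>\<close> \<kappa> by (simp add: dist_norm norm_minus_commute algebra_simps)
    moreover have "y \<in> \<Omega>"
    proof -
      define w where "w = c + (1 / \<theta>) *\<^sub>R (y - m)"
      have "norm (w - c) = norm (y - m) / \<theta>" using \<theta> by (simp add: w_def)
      also have "\<dots> < \<kappa> / \<theta>"
        using \<open>norm (y - m) < \<kappa>\<close> \<theta> by (simp add: divide_strict_right_mono)
      also have "\<dots> = \<rho> * (1 - \<eta>)" using \<theta> by (simp add: \<kappa>_def)
      finally have "w \<in> \<Omega>" using inner by (auto simp: dist_norm norm_minus_commute)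
      have "y = (1 - \<theta>) *\<^sub>R q' + \<theta> *\<^sub>R w"
        using \<theta> by (simp add: q'_def w_def m_def algebra_simps)
      also have "\<dots> \<in> \<Omega>"
        using \<theta> by (intro convexD[OF \<Omega>(2) \<open>q' \<in> \<Omega>\<close> \<open>w \<in> \<Omega>\<close>]) auto
      finally show ?thesis .
    qed
    ultimately show "y \<in> (ball c \<rho> - \<Omega>) \<union> (\<Omega> - ball c \<rho>)" by simp
  qed
  from area_symdiff_ge_ball[OF \<Omega>(1,3) this \<kappa>(1)]
  have "pi * \<kappa>\<^sup>2 \<le> area ((ball c \<rho> - \<Omega>) \<union> (\<Omega> - ball c \<rho>))" .
  moreover have "pi * \<kappa>\<^sup>2 = \<eta>\<^sup>2 * (1 - \<eta>)\<^sup>2 / (4 * (1 + \<eta>)\<^sup>2) * (pi * \<rho>\<^sup>2)"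
    using \<eta> by (simp add: \<kappa>_def \<theta>_def power2_eq_square field_simps)
  ultimately show False using small by simp
qed

lemma fraenkel_asymmetry_lessE:
  assumes "0 < area \<Omega>" and "fraenkel_asymmetry \<Omega> < \<delta>"
  obtains c where
    "area ((ball c (sqrt (area \<Omega> / pi)) - \<Omega>) \<union> (\<Omega> - ball c (sqrt (area \<Omega> / pi)))) < \<delta> * area \<Omega>"
proof -
  define \<rho> where "\<rho> = sqrt (area \<Omega> / pi)"
  have "\<rho> > 0" using assms(1) by (simp add: \<rho>_def)
  have area_\<rho>: "area (ball c \<rho>) = area \<Omega>" for c
    using area_ball[of \<rho> c] \<open>\<rho> > 0\<close> assms(1) by (simp add: \<rho>_def)
  define S where "S = {area ((B - \<Omega>) \<union> (\<Omega> - B)) / area \<Omega> | B.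
    (\<exists>c r. r > 0 \<and> B = ball c r) \<and> area B = area \<Omega>}"
  have "S \<noteq> {}" unfolding S_def using \<open>\<rho> > 0\<close> area_\<rho> by blast
  then obtain x where "x \<in> S" "x < \<delta>"
    using cInf_lessD assms(2) unfolding fraenkel_asymmetry_def S_def[symmetric] by blast
  then obtain c r where r: "r > 0" "area (ball c r) = area \<Omega>"
    and "area ((ball c r - \<Omega>) \<union> (\<Omega> - ball c r)) / area \<Omega> < \<delta>"
    unfolding S_def by blast
  moreover have "r = \<rho>"
    using r area_ball[of r c] by (simp add: \<rho>_def)
  ultimately have "area ((ball c \<rho> - \<Omega>) \<union> (\<Omega> - ball c \<rho>)) < \<delta> * area \<Omega>"
    using assms(1) by (simp add: pos_divide_less_eq)
  then show ?thesis unfolding \<rho>_def by (rule that)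
qed

lemma near_disk_threshold:
  fixes \<eta> :: real
  assumes "0 < \<eta>" "\<eta> \<le> 1 / 10"
  shows "\<eta>\<^sup>2 / 8 \<le> \<eta>\<^sup>2 * (1 - \<eta>)\<^sup>2 / (4 * (1 + \<eta>)\<^sup>2)"
proof -
  have "6 * \<eta> \<le> 1 + \<eta> * \<eta>" using assms zero_le_square[of \<eta>] by linarith
  then have "(1 + \<eta>)\<^sup>2 \<le> 2 * (1 - \<eta>)\<^sup>2" by (simp add: power2_eq_square algebra_simps)
  then have "\<eta>\<^sup>2 * (1 + \<eta>)\<^sup>2 \<le> \<eta>\<^sup>2 * (2 * (1 - \<eta>)\<^sup>2)" by (rule mult_left_mono) simp
  then show ?thesis using assms by (simp add: field_simps)
qed

lemma fraenkel_asymmetry_small_imp_annulus: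
  assumes \<Omega>: "open \<Omega>" "convex \<Omega>" "bounded \<Omega>" and "0 < area \<Omega>"
    and \<eta>: "0 < \<eta>" "\<eta> \<le> 1 / 10" and "fraenkel_asymmetry \<Omega> < \<eta>\<^sup>2 / 8"
  obtains c where "ball c (sqrt (area \<Omega> / pi) * (1 - \<eta>)) \<subseteq> \<Omega>"
    "\<Omega> \<subseteq> ball c (sqrt (area \<Omega> / pi) * (1 + \<eta>))"
proof -
  define \<rho> where "\<rho> = sqrt (area \<Omega> / pi)"
  have \<rho>: "\<rho> > 0" "pi * \<rho>\<^sup>2 = area \<Omega>" using \<open>0 < area \<Omega>\<close> by (simp_all add: \<rho>_def)
  obtain c where "area ((ball c \<rho> - \<Omega>) \<union> (\<Omega> - ball c \<rho>)) < \<eta>\<^sup>2 / 8 * area \<Omega>"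
    using fraenkel_asymmetry_lessE[OF \<open>0 < area \<Omega>\<close> \<open>fraenkel_asymmetry \<Omega> < _\<close>, folded \<rho>_def] .
  with \<rho>(2) have small: "area ((ball c \<rho> - \<Omega>) \<union> (\<Omega> - ball c \<rho>)) < \<eta>\<^sup>2 / 8 * (pi * \<rho>\<^sup>2)"
    by simp
  have "\<eta> < 1" using \<eta> by simp
  have "\<eta>\<^sup>2 / 8 * (pi * \<rho>\<^sup>2) \<le> \<eta>\<^sup>2 / 4 * (pi * \<rho>\<^sup>2)"
    and "\<eta>\<^sup>2 / 8 * (pi * \<rho>\<^sup>2) \<le> \<eta>\<^sup>2 * (1 - \<eta>)\<^sup>2 / (4 * (1 + \<eta>)\<^sup>2) * (pi * \<rho>\<^sup>2)"
    using near_disk_threshold[OF \<eta>] \<rho>(1) by (intro mult_right_mono; simp)+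
  note thresholds = this[THEN less_le_trans[OF small]]
  have inner: "ball c (\<rho> * (1 - \<eta>)) \<subseteq> \<Omega>"
    by (rule convex_near_disk_contains_ball[OF \<Omega> \<rho>(1) \<eta>(1) \<open>\<eta> < 1\<close> thresholds(1)])
  moreover have "\<Omega> \<subseteq> ball c (\<rho> * (1 + \<eta>))"
    by (rule convex_near_disk_subset_ball[OF \<Omega> \<rho>(1) \<eta>(1) \<open>\<eta> < 1\<close> inner thresholds(2)])
  ultimately show ?thesis unfolding \<rho>_def by (rule that)
qed

lemma inverse_sqrt_two_pi_gt: "(0.39::real) < 1 / sqrt (2 * pi)"
proof -
  have "2 * pi < (51 / 20 :: real)\<^sup>2" using pi_approx(2) by (simp add: power2_eq_square)
  then have "sqrt (2 * pi) < sqrt ((51 / 20)\<^sup>2)" by (rule real_sqrt_less_mono)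
  then have "sqrt (2 * pi) < 51 / 20" by simp
  then show ?thesis by (simp add: field_simps)
qed

lemma unit_disk_annulus_constants:
  defines "\<rho> \<equiv> sqrt (1 / pi)" and "\<eta> \<equiv> 1 / 1000000 :: real" and "l \<equiv> 12 / 10000 :: real"
  shows "(\<rho> * (1 + \<eta>))\<^sup>2 - (\<rho> * (1 - \<eta>))\<^sup>2 \<le> l\<^sup>2"
    and "200 * (\<rho> * (1 + \<eta>)) / 359 + 20 * l \<le> 0.39"
proof -
  have "(\<rho> * (1 + \<eta>))\<^sup>2 - (\<rho> * (1 - \<eta>))\<^sup>2 = 4 * \<eta> / pi"
    by (simp add: \<rho>_def power2_eq_square field_simps)
  also have "\<dots> \<le> l\<^sup>2" using pi_gt3 by (simp add: \<eta>_def l_def field_simps)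
  finally show "(\<rho> * (1 + \<eta>))\<^sup>2 - (\<rho> * (1 - \<eta>))\<^sup>2 \<le> l\<^sup>2" .
  have "(17 / 10)\<^sup>2 < pi" using pi_gt3 by (simp add: power2_eq_square)
  then have "17 / 10 < sqrt pi" by (rule real_less_rsqrt)
  then have "\<rho> < 10 / 17" by (simp add: \<rho>_def real_sqrt_divide field_simps)
  then show "200 * (\<rho> * (1 + \<eta>)) / 359 + 20 * l \<le> 0.39" by (simp add: \<eta>_def l_def)
qed

theorem proposition1:
  shows "\<exists>\<epsilon>0::real. \<epsilon>0 > 0 \<and>
    (\<forall>(\<Omega>::(real^2) set) u g.
       open \<Omega> \<and> connected \<Omega> \<and> convex \<Omega> \<and> bounded \<Omega> \<and>
       area \<Omega> = 1 \<and> fraenkel_asymmetry \<Omega> \<le> \<epsilon>0 \<and>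
       torsion_solution \<Omega> u g
       \<longrightarrow> (\<forall>x\<in>\<Omega>. norm (g x) \<le> 0.39)) \<and>
    (0.39::real) < 1 / sqrt (2 * pi)"
proof (intro exI conjI allI impI)
  define \<eta> :: real where "\<eta> = 1 / 1000000"
  show "0 < \<eta>\<^sup>2 / 16" by (simp add: \<eta>_def)
  show "(0.39::real) < 1 / sqrt (2 * pi)" by (rule inverse_sqrt_two_pi_gt)
  fix \<Omega> :: "(real^2) set" and u g
  assume "open \<Omega> \<and> connected \<Omega> \<and> convex \<Omega> \<and> bounded \<Omega> \<and> area \<Omega> = 1 \<and>
    fraenkel_asymmetry \<Omega> \<le> \<eta>\<^sup>2 / 16 \<and> torsion_solution \<Omega> u g"
  then have \<Omega>: "open \<Omega>" "convex \<Omega>" "bounded \<Omega>" and "area \<Omega> = 1"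
    and "fraenkel_asymmetry \<Omega> \<le> \<eta>\<^sup>2 / 16" and u: "torsion_solution \<Omega> u g"
    by auto
  moreover have "\<eta>\<^sup>2 / 16 < \<eta>\<^sup>2 / 8" by (simp add: \<eta>_def)
  ultimately have "fraenkel_asymmetry \<Omega> < \<eta>\<^sup>2 / 8" by linarith
  with \<open>area \<Omega> = 1\<close> obtain c
    where inner: "ball c (sqrt (1 / pi) * (1 - \<eta>)) \<subseteq> \<Omega>"
      and outer: "\<Omega> \<subseteq> ball c (sqrt (1 / pi) * (1 + \<eta>))"
    using fraenkel_asymmetry_small_imp_annulus[OF \<Omega>, of \<eta>] by (auto simp: \<eta>_def)
  note constants = unit_disk_annulus_constants[folded \<eta>_def]
  from torsion_solution_gradient_le_annulus[OF \<Omega>(1,2) u inner outer _ constants(1)]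
  show "\<forall>x\<in>\<Omega>. norm (g x) \<le> 0.39"
    using constants(2) by (force simp: \<eta>_def)
qed

end
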